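(* Let $S$ be a $d$-dimensional space form ($d\ge 2$), i.e. one of: the Euclidean space $\mathbb{R}^d$; the spherical space $\mathbb{S}^d=\{x\in\mathbb{R}^{d+1}:\langle x,x\rangle = C_{\mathbb S}^{-1}\}$ with curvature $C_{\mathbb S}>0$; or the hyperbolic space (Lorentz/'Loid model) $\mathbb{H}^d=\{x\in\mathbb{R}^{d+1}:[x,x]=C_{\mathbb H}^{-1},\ x_1>0\}$ with curvature $C_{\mathbb H}<0$. Then the VC dimension of the class of linear classifiers on $S$ (defined below) equals $\dim(S)+1=d+1$.
   Context: Here $\langle\cdot,\cdot\rangle$ is the standard dot product and $[u,v]=u^{\top}Hv$ with $H=\mathrm{diag}(-1,1,\dots,1)\in\mathbb{R}^{(d+1)\times(d+1)}$ is the Lorentzian inner product. The linear classifiers are: on $\mathbb{R}^d$, $x\mapsto \mathrm{sgn}(w^{\top}x+b)$ with $w\in\mathbb{R}^d$, $\|w\|_2=1$, $b\in\mathbb{R}$; on $\mathbb{S}^d$, $x\mapsto\mathrm{sgn}(\mathrm{asin}(\langle w,x\rangle))$ with $w\in\mathbb{R}^{d+1}$, $\langle w,w\rangle=C_{\mathbb S}$; on $\mathbb{H}^d$, $x\mapsto\mathrm{sgn}(\mathrm{asinh}([w,x]))$ with $w\in\mathbb{R}^{d+1}$, $[w,w]=-C_{\mathbb H}$. The VC dimension of a class of $\{\pm1\}$-valued functions is the largest number of points it shatters. *)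

theory Defs
  imports "HOL-Analysis.Analysis" "HOL-Library.Extended_Nat"
begin

(* Vectors of R^n are represented as functions nat => real vanishing at indices >= n;
   coordinate x_1 of the paper is index 0. *)
definition vecs :: "nat \<Rightarrow> (nat \<Rightarrow> real) set" where
  "vecs n = {x. \<forall>i\<ge>n. x i = 0}"

definition dotp :: "nat \<Rightarrow> (nat \<Rightarrow> real) \<Rightarrow> (nat \<Rightarrow> real) \<Rightarrow> real" where
  "dotp n x y = (\<Sum>i<n. x i * y i)"

definition lor :: "nat \<Rightarrow> (nat \<Rightarrow> real) \<Rightarrow> (nat \<Rightarrow> real) \<Rightarrow> real" where
  "lor n x y = - x 0 * y 0 + (\<Sum>i\<in>{1..<n}. x i * y i)"

(* sign with values in {-1,1}; convention sgn 0 = 1 *)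
definition sgnpm :: "real \<Rightarrow> real" where
  "sgnpm t = (if t \<ge> 0 then 1 else -1)"

definition shatters :: "((nat \<Rightarrow> real) \<Rightarrow> real) set \<Rightarrow> (nat \<Rightarrow> real) set \<Rightarrow> bool" where
  "shatters H A \<longleftrightarrow> (\<forall>l. (\<forall>x\<in>A. l x \<in> {-1, 1}) \<longrightarrow> (\<exists>h\<in>H. \<forall>x\<in>A. h x = l x))"

definition vc_dim :: "((nat \<Rightarrow> real) \<Rightarrow> real) set \<Rightarrow> (nat \<Rightarrow> real) set \<Rightarrow> enat" where
  "vc_dim H X = (SUP A\<in>{A. A \<subseteq> X \<and> finite A \<and> shatters H A}. enat (card A))"

definition euc_space :: "nat \<Rightarrow> (nat \<Rightarrow> real) set" where
  "euc_space d = vecs d"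

definition euc_class :: "nat \<Rightarrow> ((nat \<Rightarrow> real) \<Rightarrow> real) set" where
  "euc_class d = {(\<lambda>x. sgnpm (dotp d w x + b)) | w b. w \<in> vecs d \<and> sqrt (dotp d w w) = 1}"

definition sph_space :: "nat \<Rightarrow> real \<Rightarrow> (nat \<Rightarrow> real) set" where
  "sph_space d C = {x \<in> vecs (d+1). dotp (d+1) x x = 1 / C}"

definition sph_class :: "nat \<Rightarrow> real \<Rightarrow> ((nat \<Rightarrow> real) \<Rightarrow> real) set" where
  "sph_class d C = {(\<lambda>x. sgnpm (arcsin (dotp (d+1) w x))) | w. w \<in> vecs (d+1) \<and> dotp (d+1) w w = C}"

definition hyp_space :: "nat \<Rightarrow> real \<Rightarrow> (nat \<Rightarrow> real) set" where
  "hyp_space d C = {x \<in> vecs (d+1). lor (d+1) x x = 1 / C \<and> x 0 > 0}"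

definition hyp_class :: "nat \<Rightarrow> real \<Rightarrow> ((nat \<Rightarrow> real) \<Rightarrow> real) set" where
  "hyp_class d C = {(\<lambda>x. sgnpm (arsinh (lor (d+1) w x))) | w. w \<in> vecs (d+1) \<and> lor (d+1) w w = - C}"

end

theory Submission
  imports Defs "HOL-Library.Function_Algebras"
begin

text \<open>On each space form every classifier agrees, on the points of the space, with a homogeneous
  sign classifier \<open>x \<mapsto> sgn \<langle>w, x\<rangle>\<close> on \<open>\<real>\<^sup>n\<close>, \<open>n = d + 1\<close>: arcsin and arsinh preserve signs
  (on the sphere \<open>\<bar>\<langle>w, x\<rangle>\<bar> \<le> 1\<close> by Cauchy-Schwarz), \<open>[w, x] = \<langle>Hw, x\<rangle>\<close>, and the bias of a
  Euclidean classifier is absorbed by lifting \<open>x\<close> to \<open>(x, 1)\<close>. Homogeneous sign classifiers on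
  \<open>\<real>\<^sup>n\<close> shatter at most \<open>n\<close> points: \<open>n + 1\<close> points satisfy a nontrivial relation
  \<open>\<Sum> u\<^sub>v v = 0\<close>, and the labelling that is \<open>-1\<close> exactly where \<open>u\<^sub>v > 0\<close> cannot be realised.
  Conversely, explicit configurations of \<open>d + 1\<close> points are shattered: the origin and the unit
  vectors of \<open>\<real>\<^sup>d\<close>, the rescaled unit vectors of \<open>\<real>\<^sup>d\<^sup>+\<^sup>1\<close> on the sphere, and on the
  hyperboloid its apex together with the points above \<open>e\<^sub>1, \<dots>, e\<^sub>d\<close>; the weights are
  then normalised by a positive rescaling, which does not change any sign.\<close>

lemma sgnpm_mult_pos: "0 < c \<Longrightarrow> sgnpm (c * y) = sgnpm y"
  by (auto simp: sgnpm_def zero_le_mult_iff)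

lemma sgnpm_sign_mult_pos: "0 < c \<Longrightarrow> l \<in> {-1, 1} \<Longrightarrow> sgnpm (l * c) = l"
  by (auto simp: sgnpm_def)

lemma sgnpm_arcsin: "\<bar>y\<bar> \<le> 1 \<Longrightarrow> sgnpm (arcsin y) = sgnpm y"
  using le_arcsin_iff[of y 0] by (auto simp: sgnpm_def)

lemma sgnpm_arsinh: "sgnpm (arsinh y) = sgnpm y"
  using arsinh_real_neg_iff[of y] by (auto simp: sgnpm_def simp del: arsinh_real_neg_iff)

definition scale_fun :: "real \<Rightarrow> (nat \<Rightarrow> real) \<Rightarrow> nat \<Rightarrow> real" where
  "scale_fun c x = (\<lambda>i. c * x i)"

definition unit_vec :: "nat \<Rightarrow> nat \<Rightarrow> real" where
  "unit_vec i = (\<lambda>j. if j = i then 1 else 0)"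

(* \<open>nat \<Rightarrow> real\<close> has no \<open>real_vector\<close> instance; the locale provides span and independence. *)
interpretation fun_vec: vector_space scale_fun
  by unfold_locales (auto simp: scale_fun_def fun_eq_iff algebra_simps)

lemma sum_fun_apply: "(\<Sum>v\<in>S. (f v :: nat \<Rightarrow> real)) i = (\<Sum>v\<in>S. f v i)"
  by (induction S rule: infinite_finite_induct) auto

lemma unit_vec_in_vecs: "i < n \<Longrightarrow> unit_vec i \<in> vecs n"
  by (auto simp: unit_vec_def vecs_def)

lemma vecs_subset_span_unit_vecs: "vecs n \<subseteq> fun_vec.span (unit_vec ` {..<n})"
proof
  fix x assume x: "x \<in> vecs n"
  have "x = (\<Sum>i<n. scale_fun (x i) (unit_vec i))"
  proof
    fix j
    have "(\<Sum>i<n. scale_fun (x i) (unit_vec i)) j = (\<Sum>i<n. if i = j then x i else 0)"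
      unfolding sum_fun_apply scale_fun_def unit_vec_def by (rule sum.cong) auto
    then show "x j = (\<Sum>i<n. scale_fun (x i) (unit_vec i)) j"
      using x by (auto simp: vecs_def)
  qed
  also have "\<dots> \<in> fun_vec.span (unit_vec ` {..<n})"
    by (intro fun_vec.span_sum fun_vec.span_scale fun_vec.span_base) auto
  finally show "x \<in> fun_vec.span (unit_vec ` {..<n})" .
qed

lemma obtain_linear_relation:
  assumes "finite A" "A \<subseteq> vecs n" "n < card A"
  obtains t u where "t \<subseteq> A" "\<And>i. (\<Sum>v\<in>t. u v * v i) = 0" "\<exists>v\<in>t. 0 < u v"
proof -
  have "fun_vec.dependent A"
  proof (rule ccontr)
    assume "fun_vec.independent A"
    then have "card A \<le> card (unit_vec ` {..<n})"
      using fun_vec.independent_span_bound vecs_subset_span_unit_vecs assms(2) by blast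
    also have "\<dots> \<le> n"
      using card_image_le[of "{..<n}" unit_vec] by simp
    finally show False
      using assms(3) by simp
  qed
  then obtain t u where t: "t \<subseteq> A" and rel: "(\<Sum>v\<in>t. scale_fun (u v) v) = 0"
    and nz: "\<exists>v\<in>t. u v \<noteq> 0"
    unfolding fun_vec.dependent_explicit by blast
  have rel_i: "(\<Sum>v\<in>t. u v * v i) = 0" for i
    using fun_cong[OF rel, of i] by (simp add: sum_fun_apply scale_fun_def)
  show thesis
  proof (cases "\<exists>v\<in>t. 0 < u v")
    case True
    show thesis
      by (rule that[OF t rel_i True])
  next
    case False
    have "(\<Sum>v\<in>t. - u v * v i) = 0" for i
      using rel_i[of i] by (simp add: sum_negf)
    moreover have "\<exists>v\<in>t. 0 < - u v"
      using nz False by force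
    ultimately show thesis
      by (rule that[OF t])
  qed
qed

lemma dotp_scale_left: "dotp n (scale_fun c w) x = c * dotp n w x"
  unfolding dotp_def scale_fun_def by (simp add: sum_distrib_left algebra_simps)

lemma dotp_scale_right: "dotp n w (scale_fun c x) = c * dotp n w x"
  unfolding dotp_def scale_fun_def by (simp add: sum_distrib_left algebra_simps)

lemma dotp_unit_vec: "i < n \<Longrightarrow> dotp n w (unit_vec i) = w i"
  unfolding dotp_def unit_vec_def by (simp add: if_distrib cong: if_cong)

lemma dotp_self_pos: "i < n \<Longrightarrow> w i \<noteq> 0 \<Longrightarrow> 0 < dotp n w w"
  unfolding dotp_def by (rule sum_pos2[of "{..<n}" i]) (auto simp: zero_less_mult_iff)

lemma dotp_square_le: "(dotp n w x)\<^sup>2 \<le> dotp n w w * dotp n x x"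
  using Cauchy_Schwarz_ineq_sum[of w x "{..<n}"] by (simp add: dotp_def power2_eq_square)

lemma abs_dotp_le_1:
  assumes "0 < C" "dotp n w w = C" "dotp n x x = 1 / C"
  shows "\<bar>dotp n w x\<bar> \<le> 1"
proof -
  have "(dotp n w x)\<^sup>2 \<le> 1"
    using dotp_square_le[of n w x] assms by simp
  then show ?thesis
    by (simp add: abs_square_le_1)
qed

lemma dotp_linear_relation:
  assumes "\<And>i. (\<Sum>v\<in>t. u v * v i) = 0"
  shows "(\<Sum>v\<in>t. u v * dotp n w v) = 0"
proof -
  have "(\<Sum>v\<in>t. u v * dotp n w v) = (\<Sum>i<n. w i * (\<Sum>v\<in>t. u v * v i))"
    unfolding dotp_def by (simp add: sum_distrib_left sum.swap[of _ t] algebra_simps)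
  also have "\<dots> = 0"
    using assms by simp
  finally show ?thesis .
qed

lemma dotp_lift: "dotp (Suc n) (w(n := b)) (x(n := 1)) = dotp n w x + b"
proof -
  have "(\<Sum>i<n. (w(n := b)) i * (x(n := 1)) i) = dotp n w x"
    unfolding dotp_def by (rule sum.cong) auto
  then show ?thesis
    unfolding dotp_def by simp
qed

lemma lor_eq_dotp:
  assumes "1 \<le> n"
  shows "lor n w x = dotp n (w(0 := - w 0)) x"
proof -
  have "dotp n (w(0 := - w 0)) x = - w 0 * x 0 + (\<Sum>i\<in>{Suc 0..<n}. (w(0 := - w 0)) i * x i)"
    unfolding dotp_def using assms by (simp add: lessThan_atLeast0 sum.atLeast_Suc_lessThan)
  also have "(\<Sum>i\<in>{Suc 0..<n}. (w(0 := - w 0)) i * x i) = (\<Sum>i\<in>{1..<n}. w i * x i)"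
    by (rule sum.cong) auto
  finally show ?thesis
    unfolding lor_def by (rule sym)
qed

lemma lor_scale_left: "lor n (scale_fun c w) x = c * lor n w x"
  unfolding lor_def scale_fun_def by (simp add: sum_distrib_left algebra_simps)

lemma lor_scale: "lor n (scale_fun c w) (scale_fun c w) = c\<^sup>2 * lor n w w"
  unfolding lor_def scale_fun_def by (simp add: sum_distrib_left algebra_simps power2_eq_square)

lemma exists_pos_scale: "0 < (q::real) \<Longrightarrow> 0 < k \<Longrightarrow> \<exists>c>0. c\<^sup>2 * q = k"
  by (intro exI[of _ "sqrt (k / q)"]) auto

definition lin_sign_class :: "nat \<Rightarrow> ((nat \<Rightarrow> real) \<Rightarrow> real) set" where
  "lin_sign_class n = range (\<lambda>w x. sgnpm (dotp n w x))"

lemma lin_sign_class_agreeI: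
  assumes "\<forall>x\<in>A. sgnpm (dotp n w (f x)) = h x"
  shows "\<exists>h'\<in>lin_sign_class n. \<forall>x\<in>A. h' (f x) = h x"
proof (rule bexI)
  show "(\<lambda>x. sgnpm (dotp n w x)) \<in> lin_sign_class n"
    unfolding lin_sign_class_def by (rule rangeI)
qed (use assms in simp)

lemma shatters_image:
  assumes "shatters H A" and "\<forall>h\<in>H. \<exists>h'\<in>H'. \<forall>x\<in>A. h' (f x) = h x"
  shows "shatters H' (f ` A)"
  unfolding shatters_def
proof clarify
  fix l :: "(nat \<Rightarrow> real) \<Rightarrow> real"
  assume "\<forall>y\<in>f ` A. l y \<in> {-1, 1}"
  then obtain h where "h \<in> H" "\<forall>x\<in>A. h x = l (f x)"
    using assms(1)[unfolded shatters_def, rule_format, of "l \<circ> f"] by auto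
  then show "\<exists>h'\<in>H'. \<forall>y\<in>f ` A. h' y = l y"
    using assms(2) by fastforce
qed

lemma shatters_imageI:
  assumes "\<And>L. \<forall>i\<in>I. L i \<in> {-1, 1} \<Longrightarrow> \<exists>h\<in>H. \<forall>i\<in>I. h (f i) = L i"
  shows "shatters H (f ` I)"
  unfolding shatters_def
proof clarify
  fix l :: "(nat \<Rightarrow> real) \<Rightarrow> real"
  assume "\<forall>y\<in>f ` I. l y \<in> {-1, 1}"
  then show "\<exists>h\<in>H. \<forall>y\<in>f ` I. h y = l y"
    using assms[of "l \<circ> f"] by auto
qed

lemma vc_dim_eqI:
  assumes upper: "\<And>A. A \<subseteq> X \<Longrightarrow> finite A \<Longrightarrow> shatters H A \<Longrightarrow> card A \<le> card I"
    and "finite I" "inj_on p I" "p ` I \<subseteq> X" "shatters H (p ` I)"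
  shows "vc_dim H X = enat (card I)"
  unfolding vc_dim_def
proof (rule antisym)
  show "(SUP A\<in>{A. A \<subseteq> X \<and> finite A \<and> shatters H A}. enat (card A)) \<le> enat (card I)"
    by (rule SUP_least) (use upper in auto)
  show "enat (card I) \<le> (SUP A\<in>{A. A \<subseteq> X \<and> finite A \<and> shatters H A}. enat (card A))"
    using assms(2-5) card_image[OF assms(3)] by (intro SUP_upper2[of "p ` I"]) auto
qed

text \<open>A realising \<open>w\<close> would make every term of \<open>\<Sum>\<^sub>v u\<^sub>v \<langle>w, v\<rangle> = 0\<close> at most \<open>0\<close>, and the
  term at \<open>v0\<close> negative.\<close>

lemma linear_relation_not_realized:
  assumes "finite t" and rel: "\<And>i. (\<Sum>v\<in>t. u v * v i) = 0" and v0: "v0 \<in> t" "0 < u v0"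
  shows "\<not> (\<forall>v\<in>t. sgnpm (dotp n w v) = (if 0 < u v then -1 else 1))"
proof
  assume signs: "\<forall>v\<in>t. sgnpm (dotp n w v) = (if 0 < u v then -1 else 1)"
  have le: "u v * dotp n w v \<le> 0" if "v \<in> t" for v
    using signs that by (cases "0 < u v") (auto simp: sgnpm_def mult_le_0_iff split: if_splits)
  have "u v0 * dotp n w v0 < 0"
    using signs v0 by (auto simp: sgnpm_def mult_pos_neg split: if_splits)
  then have "(\<Sum>v\<in>t. u v * dotp n w v) < (\<Sum>v\<in>t. 0)"
    by (intro sum_strict_mono_ex1) (use le v0 \<open>finite t\<close> in auto)
  then show False
    using dotp_linear_relation[OF rel] by simp
qed

lemma card_le_if_shatters_lin_sign_class:
  assumes "finite A" "A \<subseteq> vecs n" "shatters (lin_sign_class n) A"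
  shows "card A \<le> n"
proof (rule ccontr)
  assume "\<not> card A \<le> n"
  then have "n < card A"
    by simp
  then obtain t u where t: "t \<subseteq> A" and rel: "\<And>i. (\<Sum>v\<in>t. u v * v i) = 0"
    and "\<exists>v\<in>t. 0 < u v"
    using obtain_linear_relation[OF assms(1,2)] by blast
  then obtain v0 where v0: "v0 \<in> t" "0 < u v0"
    by blast
  define l where "l x = (if x \<in> t \<and> 0 < u x then -1 else 1 :: real)" for x
  have "\<forall>x\<in>A. l x \<in> {-1, 1}"
    by (simp add: l_def)
  then obtain h where "h \<in> lin_sign_class n" "\<forall>x\<in>A. h x = l x"
    using assms(3) unfolding shatters_def by blast
  then obtain w where "\<forall>x\<in>A. sgnpm (dotp n w x) = l x"
    unfolding lin_sign_class_def by blast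
  then have "\<forall>v\<in>t. sgnpm (dotp n w v) = (if 0 < u v then -1 else 1)"
    using t l_def by auto
  moreover have "\<not> (\<forall>v\<in>t. sgnpm (dotp n w v) = (if 0 < u v then -1 else 1))"
    using linear_relation_not_realized[OF finite_subset[OF t assms(1)] rel v0] .
  ultimately show False
    by contradiction
qed

lemma euc_class_card_le:
  assumes "A \<subseteq> euc_space d" "finite A" "shatters (euc_class d) A"
  shows "card A \<le> d + 1"
proof -
  define lift where "lift x = x(d := 1)" for x :: "nat \<Rightarrow> real"
  have inj: "inj_on lift A"
  proof (rule inj_onI)
    fix x y assume "x \<in> A" "y \<in> A" "lift x = lift y"
    then have "x = (lift x)(d := 0)" "y = (lift y)(d := 0)"
      using assms(1) by (auto simp: lift_def euc_space_def vecs_def fun_eq_iff)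
    then show "x = y"
      using \<open>lift x = lift y\<close> by simp
  qed
  have "lift ` A \<subseteq> vecs (d + 1)"
    using assms(1) by (auto simp: lift_def vecs_def euc_space_def)
  moreover have "shatters (lin_sign_class (d + 1)) (lift ` A)"
  proof (rule shatters_image[OF assms(3)])
    show "\<forall>h\<in>euc_class d. \<exists>h'\<in>lin_sign_class (d + 1). \<forall>x\<in>A. h' (lift x) = h x"
    proof
      fix h assume "h \<in> euc_class d"
      then obtain w b where h: "h = (\<lambda>x. sgnpm (dotp d w x + b))"
        unfolding euc_class_def by blast
      have "\<forall>x\<in>A. sgnpm (dotp (d + 1) (w(d := b)) (lift x)) = h x"
        by (simp add: h lift_def dotp_lift)
      then show "\<exists>h'\<in>lin_sign_class (d + 1). \<forall>x\<in>A. h' (lift x) = h x"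
        by (rule lin_sign_class_agreeI)
    qed
  qed
  ultimately have "card (lift ` A) \<le> d + 1"
    by (rule card_le_if_shatters_lin_sign_class[OF finite_imageI[OF assms(2)]])
  then show ?thesis
    using card_image[OF inj] by simp
qed

lemma sph_class_card_le:
  assumes C: "0 < C" and A: "A \<subseteq> sph_space d C" "finite A" "shatters (sph_class d C) A"
  shows "card A \<le> d + 1"
proof -
  have agree: "\<forall>h\<in>sph_class d C. \<exists>h'\<in>lin_sign_class (d + 1). \<forall>x\<in>A. h' (id x) = h x"
  proof
    fix h assume "h \<in> sph_class d C"
    then obtain w where h: "h = (\<lambda>x. sgnpm (arcsin (dotp (d + 1) w x)))"
      and w: "dotp (d + 1) w w = C"
      unfolding sph_class_def by blast
    have "\<forall>x\<in>A. sgnpm (dotp (d + 1) w x) = h x"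
    proof
      fix x assume "x \<in> A"
      then have "\<bar>dotp (d + 1) w x\<bar> \<le> 1"
        using A(1) by (intro abs_dotp_le_1[OF C w]) (auto simp: sph_space_def)
      then show "sgnpm (dotp (d + 1) w x) = h x"
        by (simp add: h sgnpm_arcsin)
    qed
    then show "\<exists>h'\<in>lin_sign_class (d + 1). \<forall>x\<in>A. h' (id x) = h x"
      by (intro lin_sign_class_agreeI) simp
  qed
  have "A \<subseteq> vecs (d + 1)"
    using A(1) by (auto simp: sph_space_def)
  moreover from shatters_image[OF A(3) agree] have "shatters (lin_sign_class (d + 1)) A"
    by simp
  ultimately show ?thesis
    by (rule card_le_if_shatters_lin_sign_class[OF A(2)])
qed

lemma hyp_class_card_le:
  assumes A: "A \<subseteq> hyp_space d C" "finite A" "shatters (hyp_class d C) A"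
  shows "card A \<le> d + 1"
proof -
  have agree: "\<forall>h\<in>hyp_class d C. \<exists>h'\<in>lin_sign_class (d + 1). \<forall>x\<in>A. h' (id x) = h x"
  proof
    fix h assume "h \<in> hyp_class d C"
    then obtain w where h: "h = (\<lambda>x. sgnpm (arsinh (lor (d + 1) w x)))"
      unfolding hyp_class_def by blast
    have "\<forall>x\<in>A. sgnpm (dotp (d + 1) (w(0 := - w 0)) x) = h x"
      by (simp add: h sgnpm_arsinh lor_eq_dotp)
    then show "\<exists>h'\<in>lin_sign_class (d + 1). \<forall>x\<in>A. h' (id x) = h x"
      by (intro lin_sign_class_agreeI) simp
  qed
  have "A \<subseteq> vecs (d + 1)"
    using A(1) by (auto simp: hyp_space_def)
  moreover from shatters_image[OF A(3) agree] have "shatters (lin_sign_class (d + 1)) A"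
    by simp
  ultimately show ?thesis
    by (rule card_le_if_shatters_lin_sign_class[OF A(2)])
qed

definition euc_points :: "nat \<Rightarrow> nat \<Rightarrow> nat \<Rightarrow> real" where
  "euc_points d i = (if i < d then unit_vec i else 0)"

lemma euc_points_in_euc_space: "euc_points d ` {..d} \<subseteq> euc_space d"
  by (auto simp: euc_points_def euc_space_def unit_vec_in_vecs) (simp add: vecs_def)

lemma inj_on_euc_points: "inj_on (euc_points d) {..d}"
proof (rule inj_onI)
  fix i j assume "i \<in> {..d}" "j \<in> {..d}" "euc_points d i = euc_points d j"
  then have "euc_points d i i = euc_points d j i" "euc_points d i j = euc_points d j j"
    by simp_all
  then show "i = j"
    using \<open>i \<in> {..d}\<close> \<open>j \<in> {..d}\<close> by (auto simp: euc_points_def unit_vec_def split: if_splits)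
qed

lemma euc_class_shatters_euc_points:
  assumes "1 \<le> d"
  shows "shatters (euc_class d) (euc_points d ` {..d})"
proof (rule shatters_imageI)
  fix L :: "nat \<Rightarrow> real" assume L: "\<forall>i\<in>{..d}. L i \<in> {-1, 1}"
  define w where "w j = (if j < d then 2 * L j - L d else 0)" for j
  have "L 0 \<in> {-1, 1}" "L d \<in> {-1, 1}"
    using L assms by auto
  then have "0 < dotp d w w"
    using assms by (intro dotp_self_pos[of 0]) (auto simp: w_def)
  then obtain c where c: "0 < c" "c\<^sup>2 * dotp d w w = 1"
    using exists_pos_scale[OF _ zero_less_one] by blast
  have "scale_fun c w \<in> vecs d"
    by (simp add: w_def scale_fun_def vecs_def)
  moreover have "sqrt (dotp d (scale_fun c w) (scale_fun c w)) = 1"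
    using c(2) by (simp add: dotp_scale_left dotp_scale_right power2_eq_square mult.assoc)
  ultimately have h: "(\<lambda>x. sgnpm (dotp d (scale_fun c w) x + c * L d)) \<in> euc_class d"
    unfolding euc_class_def by blast
  have "sgnpm (dotp d (scale_fun c w) (euc_points d i) + c * L d) = L i" if "i \<in> {..d}" for i
  proof (cases "i < d")
    case True
    then have "dotp d (scale_fun c w) (euc_points d i) + c * L d = L i * (2 * c)"
      by (simp add: euc_points_def dotp_scale_left dotp_unit_vec w_def algebra_simps)
    then show ?thesis
      using L that c(1) by (simp add: sgnpm_sign_mult_pos)
  next
    case False
    then have "dotp d (scale_fun c w) (euc_points d i) + c * L d = L i * c"
      using that by (auto simp: euc_points_def dotp_def)
    then show ?thesis
      using L that c(1) by (simp add: sgnpm_sign_mult_pos)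
  qed
  then show "\<exists>h\<in>euc_class d. \<forall>i\<in>{..d}. h (euc_points d i) = L i"
    by (intro bexI[OF _ h]) simp
qed

definition sph_points :: "real \<Rightarrow> nat \<Rightarrow> nat \<Rightarrow> real" where
  "sph_points C i = scale_fun (1 / sqrt C) (unit_vec i)"

lemma sph_points_in_sph_space:
  assumes "0 < C"
  shows "sph_points C ` {..d} \<subseteq> sph_space d C"
proof (rule image_subsetI)
  fix i assume "i \<in> {..d}"
  then have "dotp (d + 1) (unit_vec i) (unit_vec i) = 1"
    by (simp add: dotp_unit_vec, simp add: unit_vec_def)
  then have "dotp (d + 1) (sph_points C i) (sph_points C i) = 1 / C"
    using assms by (simp add: sph_points_def dotp_scale_left dotp_scale_right)
  moreover have "sph_points C i \<in> vecs (d + 1)"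
    using \<open>i \<in> {..d}\<close> by (simp add: sph_points_def scale_fun_def unit_vec_def vecs_def)
  ultimately show "sph_points C i \<in> sph_space d C"
    by (simp add: sph_space_def)
qed

lemma inj_on_sph_points:
  assumes "0 < C"
  shows "inj_on (sph_points C) I"
proof (rule inj_onI)
  fix i j assume "sph_points C i = sph_points C j"
  then have "sph_points C i i = sph_points C j i"
    by simp
  then show "i = j"
    using assms by (auto simp: sph_points_def scale_fun_def unit_vec_def split: if_splits)
qed

lemma sph_class_shatters_sph_points:
  assumes C: "0 < C"
  shows "shatters (sph_class d C) (sph_points C ` {..d})"
proof (rule shatters_imageI)
  fix L :: "nat \<Rightarrow> real" assume L: "\<forall>i\<in>{..d}. L i \<in> {-1, 1}"
  define w where "w j = (if j \<le> d then L j else 0)" for j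
  have "L 0 \<in> {-1, 1}"
    using L by auto
  then have "0 < dotp (d + 1) w w"
    by (intro dotp_self_pos[of 0]) (auto simp: w_def)
  then obtain c where c: "0 < c" "c\<^sup>2 * dotp (d + 1) w w = C"
    using exists_pos_scale[OF _ C] by blast
  define h where "h x = sgnpm (arcsin (dotp (d + 1) (scale_fun c w) x))" for x
  have ww: "dotp (d + 1) (scale_fun c w) (scale_fun c w) = C"
    using c by (simp add: dotp_scale_left dotp_scale_right power2_eq_square)
  then have "h \<in> sph_class d C"
    unfolding sph_class_def h_def by (auto simp: w_def scale_fun_def vecs_def)
  moreover have "h (sph_points C i) = L i" if i: "i \<in> {..d}" for i
  proof -
    have "sph_points C i \<in> sph_space d C"
      using sph_points_in_sph_space[OF C] i by blast
    then have "h (sph_points C i) = sgnpm (dotp (d + 1) (scale_fun c w) (sph_points C i))"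
      unfolding h_def using abs_dotp_le_1[OF C ww] by (simp add: sph_space_def sgnpm_arcsin)
    also have "dotp (d + 1) (scale_fun c w) (sph_points C i) = L i * (c / sqrt C)"
      using i by (simp add: sph_points_def dotp_scale_left dotp_scale_right dotp_unit_vec w_def)
    also have "sgnpm \<dots> = L i"
      using sgnpm_sign_mult_pos[of "c / sqrt C" "L i"] L i c(1) C by simp
    finally show ?thesis .
  qed
  ultimately show "\<exists>h\<in>sph_class d C. \<forall>i\<in>{..d}. h (sph_points C i) = L i"
    by blast
qed

text \<open>\<open>p\<^sub>0 = (r, 0, \<dots>, 0)\<close> and \<open>p\<^sub>i = (s, e\<^sub>i)\<close> with \<open>-r\<^sup>2 = 1 - s\<^sup>2 = 1/C\<close>.\<close>

definition hyp_points :: "real \<Rightarrow> nat \<Rightarrow> nat \<Rightarrow> real" where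
  "hyp_points C i = (unit_vec i)(0 := sqrt ((if i = 0 then 0 else 1) - 1 / C))"

lemma lor_hyp_points:
  "lor n w (hyp_points C i) = - w 0 * hyp_points C i 0 + (if 1 \<le> i \<and> i < n then w i else 0)"
proof -
  have "(\<Sum>j\<in>{1..<n}. w j * hyp_points C i j) = (\<Sum>j\<in>{1..<n}. if j = i then w j else 0)"
    by (rule sum.cong) (auto simp: hyp_points_def unit_vec_def)
  then show ?thesis
    by (simp add: lor_def)
qed

lemma hyp_points_in_hyp_space:
  assumes "C < 0"
  shows "hyp_points C ` {..d} \<subseteq> hyp_space d C"
proof (rule image_subsetI)
  fix i assume i: "i \<in> {..d}"
  define a where "a = (if i = 0 then 0 else 1 :: real)"
  have "0 < a - 1 / C"
    using assms by (simp add: a_def divide_less_0_iff)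
  then have p0: "0 < hyp_points C i 0" "(hyp_points C i 0)\<^sup>2 = a - 1 / C"
    by (simp_all add: hyp_points_def a_def)
  have "lor (d + 1) (hyp_points C i) (hyp_points C i) = - (hyp_points C i 0)\<^sup>2 + a"
    using i by (simp add: lor_hyp_points power2_eq_square a_def, simp add: hyp_points_def unit_vec_def)
  then have "lor (d + 1) (hyp_points C i) (hyp_points C i) = 1 / C"
    using p0(2) by simp
  moreover have "hyp_points C i \<in> vecs (d + 1)"
    using i by (auto simp: hyp_points_def unit_vec_def vecs_def)
  ultimately show "hyp_points C i \<in> hyp_space d C"
    using p0(1) by (simp add: hyp_space_def)
qed

lemma inj_on_hyp_points:
  assumes "C < 0"
  shows "inj_on (hyp_points C) I"
proof (rule inj_onI)
  fix i j assume "hyp_points C i = hyp_points C j"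
  then have "hyp_points C i 0 = hyp_points C j 0" "hyp_points C i i = hyp_points C j i"
    by simp_all
  then show "i = j"
    using assms by (auto simp: hyp_points_def unit_vec_def divide_neg_pos split: if_splits)
qed

definition hyp_weight :: "real \<Rightarrow> nat \<Rightarrow> (nat \<Rightarrow> real) \<Rightarrow> nat \<Rightarrow> real" where
  "hyp_weight s d L j = (if j = 0 then - L 0 else if j \<le> d then L j * (s + 1) - L 0 * s else 0)"

lemma lor_hyp_weight_pos:
  assumes "0 < s" "2 \<le> d" and L: "\<forall>i\<in>{..d}. L i \<in> {-1, 1}"
  shows "0 < lor (d + 1) (hyp_weight s d L) (hyp_weight s d L)"
proof -
  let ?w = "hyp_weight s d L"
  have "1 \<le> ?w j * ?w j" if "j \<in> {1..<d + 1}" for j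
  proof -
    have "L j \<in> {-1, 1}" "L 0 \<in> {-1, 1}"
      using L that by auto
    then have "?w j * ?w j \<in> {1, (2 * s + 1)\<^sup>2}"
      using that by (auto simp: hyp_weight_def power2_eq_square algebra_simps)
    moreover have "1 \<le> (2 * s + 1)\<^sup>2"
      using assms(1) by (intro one_le_power) simp
    ultimately show ?thesis
      by auto
  qed
  then have "(\<Sum>j\<in>{1..<d + 1}. 1) \<le> (\<Sum>j\<in>{1..<d + 1}. ?w j * ?w j)"
    by (rule sum_mono)
  moreover have "L 0 \<in> {-1, 1}"
    using L by auto
  then have "?w 0 * ?w 0 = 1"
    by (auto simp: hyp_weight_def)
  ultimately show ?thesis
    using assms(2) by (simp add: lor_def)
qed

lemma lor_hyp_weight_hyp_points:
  assumes "i \<le> d"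
  shows "lor (d + 1) (hyp_weight (sqrt (1 - 1 / C)) d L) (hyp_points C i)
    = L i * (hyp_points C i 0 + (if i = 0 then 0 else 1))"
  unfolding lor_hyp_points using assms
  by (cases "i = 0") (auto simp: hyp_weight_def hyp_points_def algebra_simps)

lemma hyp_class_shatters_hyp_points:
  assumes C: "C < 0" and d: "2 \<le> d"
  shows "shatters (hyp_class d C) (hyp_points C ` {..d})"
proof (rule shatters_imageI)
  fix L :: "nat \<Rightarrow> real" assume L: "\<forall>i\<in>{..d}. L i \<in> {-1, 1}"
  define w where "w = hyp_weight (sqrt (1 - 1 / C)) d L"
  have "0 < sqrt (1 - 1 / C)"
    using C by (simp add: divide_less_0_iff)
  then have "0 < lor (d + 1) w w"
    unfolding w_def using d L by (rule lor_hyp_weight_pos)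
  moreover have "0 < - C"
    using C by simp
  ultimately obtain c where c: "0 < c" "c\<^sup>2 * lor (d + 1) w w = - C"
    using exists_pos_scale by blast
  define h where "h x = sgnpm (arsinh (lor (d + 1) (scale_fun c w) x))" for x
  have "scale_fun c w \<in> vecs (d + 1)"
    by (simp add: w_def hyp_weight_def scale_fun_def vecs_def)
  moreover have "lor (d + 1) (scale_fun c w) (scale_fun c w) = - C"
    using c(2) by (simp add: lor_scale)
  ultimately have "h \<in> hyp_class d C"
    unfolding hyp_class_def h_def by blast
  moreover have "h (hyp_points C i) = L i" if i: "i \<in> {..d}" for i
  proof -
    have "0 < hyp_points C i 0"
      using hyp_points_in_hyp_space[OF C] i by (auto simp: hyp_space_def)
    then have pos: "0 < hyp_points C i 0 + (if i = 0 then 0 else 1)"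
      by (cases "i = 0") simp_all
    have "h (hyp_points C i) = sgnpm (lor (d + 1) w (hyp_points C i))"
      using c(1) by (simp add: h_def sgnpm_arsinh lor_scale_left sgnpm_mult_pos)
    also have "lor (d + 1) w (hyp_points C i) = L i * (hyp_points C i 0 + (if i = 0 then 0 else 1))"
      unfolding w_def by (rule lor_hyp_weight_hyp_points) (use i in simp)
    also have "sgnpm \<dots> = L i"
      using sgnpm_sign_mult_pos[OF pos] L i by simp
    finally show ?thesis .
  qed
  ultimately show "\<exists>h\<in>hyp_class d C. \<forall>i\<in>{..d}. h (hyp_points C i) = L i"
    by blast
qed

theorem theorem1:
  fixes d :: nat
  assumes "d \<ge> 2"
  shows "vc_dim (euc_class d) (euc_space d) = enat (d + 1)
       \<and> (\<forall>C::real. C > 0 \<longrightarrow> vc_dim (sph_class d C) (sph_space d C) = enat (d + 1))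
       \<and> (\<forall>C::real. C < 0 \<longrightarrow> vc_dim (hyp_class d C) (hyp_space d C) = enat (d + 1))"
proof (intro conjI allI impI)
  show "vc_dim (euc_class d) (euc_space d) = enat (d + 1)"
    using vc_dim_eqI[where p = "euc_points d", OF _ _ inj_on_euc_points euc_points_in_euc_space
        euc_class_shatters_euc_points] euc_class_card_le assms
    by simp
next
  fix C :: real assume "C > 0"
  then show "vc_dim (sph_class d C) (sph_space d C) = enat (d + 1)"
    using vc_dim_eqI[where p = "sph_points C", OF _ _ inj_on_sph_points sph_points_in_sph_space
        sph_class_shatters_sph_points] sph_class_card_le
    by simp
next
  fix C :: real assume "C < 0"
  then show "vc_dim (hyp_class d C) (hyp_space d C) = enat (d + 1)"
    using vc_dim_eqI[where p = "hyp_points C", OF _ _ inj_on_hyp_points hyp_points_in_hyp_space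
        hyp_class_shatters_hyp_points] hyp_class_card_le assms
    by simp
qed

end
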